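(* Let $\mathcal{X}_{k-1}\subset\mathbb{R}^n$ and $\mathcal{W}_{k-1}\subset\mathbb{R}^q$ be constrained zonotopes and $u_{k-1}\in\mathbb{R}^p$ a fixed vector. Let $f:\mathbb{R}^n\times\mathbb{R}^p\times\mathbb{R}^q\to\mathbb{R}^n$ and write it as $\varrho^{\rm f}:\mathbb{R}^{n+p+q}\to\mathbb{R}^n$, $\varrho^{\rm f}(z)=f(x,u,w)$ for $z=[x^\top\ u^\top\ w^\top]^\top$. Let $\mathcal{Z}_{k-1}=\mathcal{X}_{k-1}\times\{u_{k-1}\}\times\mathcal{W}_{k-1}$, let $\mathcal{P}_{k-1}\supseteq\mathcal{Z}_{k-1}$ be a convex polytope, and suppose $\varrho^{\rm f}=\varrho^{\rm fa}-\varrho^{\rm fb}$ on $\mathcal{P}_{k-1}$ where $\varrho^{\rm fa},\varrho^{\rm fb}:\mathbb{R}^{n+p+q}\to\mathbb{R}^n$ are differentiable and componentwise convex on $\mathcal{P}_{k-1}$. Let $\bar z=[\bar x^\top\ u_{k-1}^\top\ \bar w^\top]^\top\in\mathcal{P}_{k-1}$, let $F=\nabla_z\varrho^{\rm f}(\bar z)$, $F^{\rm x}=\nabla_x\varrho^{\rm f}(\bar z)$, $F^{\rm w}=\nabla_w\varrho^{\rm f}(\bar z)$, and define the linearizations $\bar\varrho(z)=\varrho^{\rm f}(\bar z)+F(z-\bar z)$, $\bar\varrho^{\rm a}(z)=\varrho^{\rm fa}(\bar z)+\nabla_z\varrho^{\rm fa}(\bar z)(z-\bar z)$, $\bar\varrho^{\rm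 b}(z)=\varrho^{\rm fb}(\bar z)+\nabla_z\varrho^{\rm fb}(\bar z)(z-\bar z)$. For $i=1,\ldots,n$ let $$e^-_i=\min_{z\in\mathrm{vert}(\mathcal{P}_{k-1})}\big(\bar\varrho^{\rm a}_i(z)-\varrho^{\rm fb}_i(z)-\bar\varrho_i(z)\big),\qquad e^+_i=\max_{z\in\mathrm{vert}(\mathcal{P}_{k-1})}\big(\varrho^{\rm fa}_i(z)-\bar\varrho^{\rm b}_i(z)-\bar\varrho_i(z)\big),$$ and let $\mathcal{R}_{k-1}$ be the zonotope $\{\mathrm{diag}(\tfrac12(e^+-e^-)),\tfrac12(e^-+e^+)\}$, i.e. the box $[e^-,e^+]$. Then $$\{f(x,u_{k-1},w):x\in\mathcal{X}_{k-1},\ w\in\mathcal{W}_{k-1}\}\subseteq\mathcal{X}_{k|k-1}:=\big(\varrho^{\rm f}(\bar z)-F^{\rm x}\bar x-F^{\rm w}\bar w\big)\oplus F^{\rm x}\mathcal{X}_{k-1}\oplus F^{\rm w}\mathcal{W}_{k-1}\oplus\mathcal{R}_{k-1},$$ and $\mathcal{X}_{k|k-1}$ is a constrained zonotope.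
   Context: A constrained zonotope (CZ) is a set $\{G,c,A,b\}=\{G\xi+c:\xi\in[-1,1]^{n_g},\ A\xi=b\}$ with $G\in\mathbb{R}^{n\times n_g}$, $c\in\mathbb{R}^n$, $A\in\mathbb{R}^{n_h\times n_g}$, $b\in\mathbb{R}^{n_h}$; a zonotope $\{G,c\}$ has no equality constraints. $\oplus$ denotes Minkowski sum (a vector is treated as a singleton), $L\mathcal{X}=\{Lx:x\in\mathcal{X}\}$, $\times$ is the Cartesian product, and $\mathrm{vert}(\mathcal{P})$ is the (finite) vertex set of a polytope $\mathcal{P}$. For a vector-valued function, "convex" means each component is convex; $\nabla_x$ denotes the Jacobian with respect to the block $x$ of the argument. *)

theory Defs
  imports "HOL-Analysis.Analysis"
begin

text \<open>Constrained zonotope {G,c,A,b} with n_g generators (columns G j, j < n_g)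
  and n_h equality constraints (rows i < n_h of A, entries A i j).\<close>
definition cz_set ::
  "nat \<Rightarrow> nat \<Rightarrow> (nat \<Rightarrow> 'a::real_vector) \<Rightarrow> 'a \<Rightarrow> (nat \<Rightarrow> nat \<Rightarrow> real) \<Rightarrow> (nat \<Rightarrow> real) \<Rightarrow> 'a set"
  where "cz_set ng nh G c A b =
    {(\<Sum>j<ng. \<xi> j *\<^sub>R G j) + c | \<xi>.
        (\<forall>j<ng. \<bar>\<xi> j\<bar> \<le> 1) \<and> (\<forall>i<nh. (\<Sum>j<ng. A i j * \<xi> j) = b i)}"

definition is_cz :: "'a::real_vector set \<Rightarrow> bool"
  where "is_cz S \<longleftrightarrow> (\<exists>ng nh G c A b. S = cz_set ng nh G c A b)"

definition zonotope_set :: "('g::finite \<Rightarrow> 'a::real_vector) \<Rightarrow> 'a \<Rightarrow> 'a set"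
  where "zonotope_set G c = {(\<Sum>j\<in>UNIV. \<xi> j *\<^sub>R G j) + c | \<xi>. \<forall>j. \<bar>\<xi> j\<bar> \<le> 1}"

definition msum :: "'a::plus set \<Rightarrow> 'a set \<Rightarrow> 'a set" (infixl \<open>\<oplus>\<^sub>M\<close> 65)
  where "A \<oplus>\<^sub>M B = {a + b | a b. a \<in> A \<and> b \<in> B}"

definition vertices :: "'a::real_vector set \<Rightarrow> 'a set"
  where "vertices P = {v. v extreme_point_of P}"

end

theory Submission
  imports Defs
begin

(* Let l(z) = f(zb) + F (z - zb) be the linearisation of f at zb = (xb, u, wb); only the
   linearity of F matters. The affine map l sends X x {u} x W into the first three summands,
   so it suffices to enclose the remainder f - l in the box [em, ep]. On P the convex
   functions fa and fb lie above their tangent planes at zb, hence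
     (tangent of fa) - fb - l  <=  f - l  <=  fa - (tangent of fb) - l
   componentwise. The lower bound is concave and the upper bound convex, so over the
   polytope P they attain their extremes at vertices, which gives exactly em and ep.
   Constrained zonotopes are closed under linear images and Minkowski sums (generators are
   concatenated, constraints combined block-diagonally), and a box is a zonotope. *)

definition cz_coeffs :: "nat \<Rightarrow> nat \<Rightarrow> (nat \<Rightarrow> nat \<Rightarrow> real) \<Rightarrow> (nat \<Rightarrow> real) \<Rightarrow> (nat \<Rightarrow> real) set"
  where "cz_coeffs ng nh A b =
    {\<xi>. (\<forall>j<ng. \<bar>\<xi> j\<bar> \<le> 1) \<and> (\<forall>i<nh. (\<Sum>j<ng. A i j * \<xi> j) = b i)}"

lemma cz_set_eq_image:
  "cz_set ng nh G c A b = (\<lambda>\<xi>. (\<Sum>j<ng. \<xi> j *\<^sub>R G j) + c) ` cz_coeffs ng nh A b"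
  by (auto simp: cz_set_def cz_coeffs_def)

lemma is_cz_singleton: "is_cz {c}"
proof -
  have "cz_set 0 0 G c A b = {c}" for G A b
    by (auto simp: cz_set_def)
  then show ?thesis
    unfolding is_cz_def by metis
qed

lemma cz_set_linear_image:
  assumes "linear L"
  shows "L ` cz_set ng nh G c A b = cz_set ng nh (L \<circ> G) (L c) A b"
  unfolding cz_set_eq_image image_image
  by (simp add: linear_add[OF assms] linear_sum[OF assms] linear_scale[OF assms])

lemma is_cz_linear_image: "linear L \<Longrightarrow> is_cz S \<Longrightarrow> is_cz (L ` S)"
  unfolding is_cz_def by (metis cz_set_linear_image)

lemma zonotope_set_eq_cz_set:
  fixes G :: "'g::finite \<Rightarrow> 'a::real_vector"
  assumes e: "bij_betw e {..<CARD('g)} UNIV"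
  shows "zonotope_set G c = cz_set CARD('g) 0 (G \<circ> e) c A b"
proof -
  let ?N = "CARD('g)"
  have sum_e: "(\<Sum>j<?N. \<eta> (e j) *\<^sub>R G (e j)) = (\<Sum>g\<in>UNIV. \<eta> g *\<^sub>R G g)" for \<eta>
    using sum.reindex_bij_betw[OF e, of "\<lambda>g. \<eta> g *\<^sub>R G g"] .
  have e_inv: "e (inv_into {..<?N} e g) = g" "inv_into {..<?N} e g < ?N" for g
    using bij_betw_inv_into_right[OF e] bij_betwE[OF bij_betw_inv_into[OF e]] by auto
  have inv_e: "inv_into {..<?N} e (e j) = j" if "j < ?N" for j
    using bij_betw_inv_into_left[OF e] that by simp
  show ?thesis
  proof (intro set_eqI iffI)
    fix x assume "x \<in> zonotope_set G c"
    then obtain \<eta> where "x = (\<Sum>g\<in>UNIV. \<eta> g *\<^sub>R G g) + c" "\<forall>g. \<bar>\<eta> g\<bar> \<le> 1"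
      unfolding zonotope_set_def by blast
    then show "x \<in> cz_set ?N 0 (G \<circ> e) c A b"
      unfolding cz_set_def by (intro CollectI exI[of _ "\<eta> \<circ> e"]) (simp add: sum_e)
  next
    fix x assume "x \<in> cz_set ?N 0 (G \<circ> e) c A b"
    then obtain \<xi> where x: "x = (\<Sum>j<?N. \<xi> j *\<^sub>R G (e j)) + c" and \<xi>: "\<forall>j<?N. \<bar>\<xi> j\<bar> \<le> 1"
      unfolding cz_set_def by auto
    define \<eta> where "\<eta> = \<xi> \<circ> inv_into {..<?N} e"
    have "x = (\<Sum>g\<in>UNIV. \<eta> g *\<^sub>R G g) + c"
      unfolding x sum_e[symmetric] by (simp add: \<eta>_def inv_e)
    moreover have "\<forall>g. \<bar>\<eta> g\<bar> \<le> 1"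
      using \<xi> e_inv(2) by (simp add: \<eta>_def)
    ultimately show "x \<in> zonotope_set G c"
      unfolding zonotope_set_def by blast
  qed
qed

lemma is_cz_zonotope_set:
  fixes G :: "'g::finite \<Rightarrow> 'a::real_vector"
  shows "is_cz (zonotope_set G c)"
proof -
  obtain e where "bij_betw e {..<CARD('g)} (UNIV :: 'g set)"
    using ex_bij_betw_nat_finite[of "UNIV :: 'g set"] by (auto simp: lessThan_atLeast0)
  then show ?thesis
    unfolding is_cz_def by (metis zonotope_set_eq_cz_set)
qed

definition seq_append :: "nat \<Rightarrow> (nat \<Rightarrow> 'a) \<Rightarrow> (nat \<Rightarrow> 'a) \<Rightarrow> nat \<Rightarrow> 'a"
  where "seq_append n f g j = (if j < n then f j else g (j - n))"

(* The block matrix [A1 0; 0 A2], where A1 occupies the first h rows and n columns. *)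
definition block_diag ::
  "nat \<Rightarrow> nat \<Rightarrow> (nat \<Rightarrow> nat \<Rightarrow> real) \<Rightarrow> (nat \<Rightarrow> nat \<Rightarrow> real) \<Rightarrow> nat \<Rightarrow> nat \<Rightarrow> real"
  where "block_diag h n A1 A2 =
    seq_append h (\<lambda>i. seq_append n (A1 i) (\<lambda>_. 0)) (\<lambda>i. seq_append n (\<lambda>_. 0) (A2 i))"

lemma seq_append_shift: "seq_append n f (\<lambda>j. f (j + n)) = f"
  by (auto simp: seq_append_def fun_eq_iff)

lemma sum_lessThan_add:
  fixes n :: nat
  shows "(\<Sum>j<m + n. \<phi> j) = (\<Sum>j<m. \<phi> j) + (\<Sum>j<n. \<phi> (j + m))"
  by (induction n) (auto simp: ac_simps)

lemma all_lessThan_add_iff: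
  fixes n :: nat
  shows "(\<forall>j<m + n. P j) \<longleftrightarrow> (\<forall>j<m. P j) \<and> (\<forall>j<n. P (j + m))"
  by (metis add.commute add_diff_inverse_nat add_less_cancel_left trans_less_add1)

lemma sum_lessThan_seq_append:
  "(\<Sum>j<m + n. h (seq_append m f1 f2 j) (seq_append m g1 g2 j))
     = (\<Sum>j<m. h (f1 j) (g1 j)) + (\<Sum>j<n. h (f2 j) (g2 j))"
  by (simp add: sum_lessThan_add seq_append_def)

lemma seq_append_in_cz_coeffs_iff:
  "seq_append n1 \<xi>1 \<xi>2 \<in> cz_coeffs (n1 + n2) (h1 + h2) (block_diag h1 n1 A1 A2) (seq_append h1 b1 b2)
     \<longleftrightarrow> \<xi>1 \<in> cz_coeffs n1 h1 A1 b1 \<and> \<xi>2 \<in> cz_coeffs n2 h2 A2 b2"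
proof -
  have rows: "(\<Sum>j<n1 + n2. block_diag h1 n1 A1 A2 i j * seq_append n1 \<xi>1 \<xi>2 j)
      = (if i < h1 then \<Sum>j<n1. A1 i j * \<xi>1 j else \<Sum>j<n2. A2 (i - h1) j * \<xi>2 j)" for i
    unfolding block_diag_def by (simp add: seq_append_def[of h1] sum_lessThan_seq_append)
  show ?thesis
    unfolding cz_coeffs_def mem_Collect_eq all_lessThan_add_iff rows
    by (auto simp: seq_append_def)
qed

lemma cz_set_msum:
  "cz_set n1 h1 G1 c1 A1 b1 \<oplus>\<^sub>M cz_set n2 h2 G2 c2 A2 b2
     = cz_set (n1 + n2) (h1 + h2) (seq_append n1 G1 G2) (c1 + c2)
         (block_diag h1 n1 A1 A2) (seq_append h1 b1 b2)"
  (is "_ = cz_set _ _ ?G _ ?A ?b")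
proof -
  have point: "(\<Sum>j<n1 + n2. seq_append n1 \<xi>1 \<xi>2 j *\<^sub>R ?G j) + (c1 + c2)
      = ((\<Sum>j<n1. \<xi>1 j *\<^sub>R G1 j) + c1) + ((\<Sum>j<n2. \<xi>2 j *\<^sub>R G2 j) + c2)" for \<xi>1 \<xi>2
    by (simp add: sum_lessThan_seq_append algebra_simps)
  show ?thesis
  proof (intro set_eqI iffI)
    fix x assume "x \<in> cz_set n1 h1 G1 c1 A1 b1 \<oplus>\<^sub>M cz_set n2 h2 G2 c2 A2 b2"
    then obtain \<xi>1 \<xi>2 where "\<xi>1 \<in> cz_coeffs n1 h1 A1 b1" "\<xi>2 \<in> cz_coeffs n2 h2 A2 b2"
      and "x = ((\<Sum>j<n1. \<xi>1 j *\<^sub>R G1 j) + c1) + ((\<Sum>j<n2. \<xi>2 j *\<^sub>R G2 j) + c2)"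
      unfolding msum_def cz_set_eq_image by blast
    then show "x \<in> cz_set (n1 + n2) (h1 + h2) ?G (c1 + c2) ?A ?b"
      unfolding cz_set_eq_image point[symmetric]
      by (intro image_eqI[of _ _ "seq_append n1 \<xi>1 \<xi>2"]) (simp_all add: seq_append_in_cz_coeffs_iff)
  next
    fix x assume "x \<in> cz_set (n1 + n2) (h1 + h2) ?G (c1 + c2) ?A ?b"
    then obtain \<xi> where \<xi>: "\<xi> \<in> cz_coeffs (n1 + n2) (h1 + h2) ?A ?b"
      and x: "x = (\<Sum>j<n1 + n2. \<xi> j *\<^sub>R ?G j) + (c1 + c2)"
      unfolding cz_set_eq_image by blast
    define \<xi>2 where "\<xi>2 j = \<xi> (j + n1)" for j
    have split: "\<xi> = seq_append n1 \<xi> \<xi>2"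
      unfolding \<xi>2_def by (rule seq_append_shift[symmetric])
    from \<xi> have "\<xi> \<in> cz_coeffs n1 h1 A1 b1 \<and> \<xi>2 \<in> cz_coeffs n2 h2 A2 b2"
      by (subst (asm) split) (simp only: seq_append_in_cz_coeffs_iff)
    moreover have "x = ((\<Sum>j<n1. \<xi> j *\<^sub>R G1 j) + c1) + ((\<Sum>j<n2. \<xi>2 j *\<^sub>R G2 j) + c2)"
      using x by (subst (asm) split) (simp only: point)
    ultimately show "x \<in> cz_set n1 h1 G1 c1 A1 b1 \<oplus>\<^sub>M cz_set n2 h2 G2 c2 A2 b2"
      unfolding msum_def cz_set_eq_image by blast
  qed
qed

lemma is_cz_msum: "is_cz S \<Longrightarrow> is_cz T \<Longrightarrow> is_cz (S \<oplus>\<^sub>M T)"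
  unfolding is_cz_def by (metis cz_set_msum)

lemma convex_on_ge_tangent:
  fixes g :: "'a::real_normed_vector \<Rightarrow> real"
  assumes g: "convex_on S g" and dg: "(g has_derivative g') (at a within S)"
    and a: "a \<in> S" and z: "z \<in> S"
  shows "g a + g' (z - a) \<le> g z"
proof -
  define \<gamma> where "\<gamma> t = a + t *\<^sub>R (z - a)" for t :: real
  have \<gamma>_convex_comb: "\<gamma> t = (1 - t) *\<^sub>R a + t *\<^sub>R z" for t
    by (simp add: \<gamma>_def algebra_simps)
  have "\<gamma> ` {0..1} \<subseteq> S"
    using convex_on_imp_convex[OF g] a z by (auto simp: \<gamma>_convex_comb intro: convexD_alt)
  then have dg_\<gamma>: "(g has_derivative g') (at (\<gamma> 0) within \<gamma> ` {0..1})"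
    using dg by (simp add: \<gamma>_def has_derivative_subset)
  have "(\<gamma> has_derivative (\<lambda>t. t *\<^sub>R (z - a))) (at 0 within {0..1})"
    unfolding \<gamma>_def by (auto intro!: derivative_eq_intros)
  from diff_chain_within[OF this dg_\<gamma>]
  have "((g \<circ> \<gamma>) has_field_derivative g' (z - a)) (at 0 within {0..1})"
    using linear_scale[OF has_derivative_linear[OF dg]]
    by (simp add: has_field_derivative_def o_def mult_commute_abs)
  then have "((\<lambda>t. (g (\<gamma> t) - g (\<gamma> 0)) / t) \<longlongrightarrow> g' (z - a)) (at_right 0)"
    by (simp add: has_field_derivative_iff at_within_Icc_at_right)
  moreover have "\<forall>\<^sub>F t in at_right 0. (g (\<gamma> t) - g (\<gamma> 0)) / t \<le> g z - g a"
    using eventually_at_right_real[OF zero_less_one]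
  proof eventually_elim
    case (elim t)
    then have "g (\<gamma> t) - g (\<gamma> 0) \<le> t * (g z - g a)"
      unfolding \<gamma>_convex_comb using convex_onD[OF g, of t a z] a z by (simp add: algebra_simps)
    with elim show ?case
      by (simp add: pos_divide_le_eq mult.commute)
  qed
  ultimately have "g' (z - a) \<le> g z - g a"
    by (rule tendsto_le[OF trivial_limit_at_right_real tendsto_const])
  then show ?thesis
    by simp
qed

lemma convex_on_affine:
  fixes L :: "'a::real_vector \<Rightarrow> real"
  assumes "linear L" "convex S"
  shows "convex_on S (\<lambda>v. c + L (v - a))"
  using assms by (intro convex_onI) (simp_all add: linear_diff linear_add linear_scale algebra_simps)

lemma concave_on_affine:
  fixes L :: "'a::real_vector \<Rightarrow> real"
  assumes "linear L" "convex S"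
  shows "concave_on S (\<lambda>v. c + L (v - a))"
  using convex_on_affine[of "\<lambda>v. - L v" S "- c" a] assms
  by (simp add: concave_on_def linear_compose_neg)

lemma finite_vertices_polytope:
  fixes P :: "'a::euclidean_space set"
  assumes "polytope P"
  shows "finite (vertices P)"
  unfolding vertices_def using assms by (intro finite_polyhedron_extreme_points polytope_imp_polyhedron)

lemma polytope_eq_convex_hull_vertices:
  fixes P :: "'a::euclidean_space set"
  assumes "polytope P"
  shows "P = convex hull (vertices P)"
  unfolding vertices_def using assms by (intro Krein_Milman_Minkowski polytope_imp_compact polytope_imp_convex)

lemma convex_on_polytope_le_Max_vertices:
  fixes P :: "'a::euclidean_space set"
  assumes P: "polytope P" and g: "convex_on P g" and z: "z \<in> P"
  shows "g z \<le> Max (g ` vertices P)"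
proof -
  have hull: "convex hull (vertices P) = P"
    using P by (rule polytope_eq_convex_hull_vertices[symmetric])
  with z have "vertices P \<noteq> {}"
    by auto
  have "convex_on (convex hull (vertices P)) g"
    using g by (simp only: hull)
  moreover have "\<forall>v\<in>vertices P. g v \<le> Max (g ` vertices P)"
    using finite_vertices_polytope[OF P] \<open>vertices P \<noteq> {}\<close> by simp
  ultimately have "\<forall>x\<in>convex hull (vertices P). g x \<le> Max (g ` vertices P)"
    by (rule convex_on_convex_hull_bound)
  then show ?thesis
    using z by (simp only: hull)
qed

lemma concave_on_polytope_Min_vertices_le:
  fixes P :: "'a::euclidean_space set"
  assumes P: "polytope P" and g: "concave_on P g" and z: "z \<in> P"
  shows "Min (g ` vertices P) \<le> g z"
proof -
  have hull: "convex hull (vertices P) = P"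
    using P by (rule polytope_eq_convex_hull_vertices[symmetric])
  with z have "vertices P \<noteq> {}"
    by auto
  have "convex_on (convex hull (vertices P)) (\<lambda>x. - g x)"
    using g by (simp only: hull concave_on_def)
  moreover have "\<forall>v\<in>vertices P. - g v \<le> - Min (g ` vertices P)"
    using finite_vertices_polytope[OF P] \<open>vertices P \<noteq> {}\<close> by simp
  ultimately have "\<forall>x\<in>convex hull (vertices P). - g x \<le> - Min (g ` vertices P)"
    by (rule convex_on_convex_hull_bound)
  then show ?thesis
    using z by (simp add: hull)
qed

lemma dc_linearization_error_bounds:
  fixes ga gb h :: "'a::euclidean_space \<Rightarrow> real"
  assumes P: "polytope P" and z0: "z0 \<in> P" and z: "z \<in> P"
    and ga: "convex_on P ga" and gb: "convex_on P gb"
    and dga: "(ga has_derivative Ga) (at z0 within P)"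
    and dgb: "(gb has_derivative Gb) (at z0 within P)"
    and h: "convex_on P h" "concave_on P h"
  shows "Min ((\<lambda>v. ga z0 + Ga (v - z0) - gb v - h v) ` vertices P) \<le> ga z - gb z - h z"
    and "ga z - gb z - h z \<le> Max ((\<lambda>v. ga v - (gb z0 + Gb (v - z0)) - h v) ` vertices P)"
proof -
  have "convex P"
    using P by (rule polytope_imp_convex)
  then have tangent_a: "concave_on P (\<lambda>v. ga z0 + Ga (v - z0))"
    and tangent_b: "concave_on P (\<lambda>v. gb z0 + Gb (v - z0))"
    using concave_on_affine has_derivative_linear[OF dga] has_derivative_linear[OF dgb] by blast+
  have "concave_on P (\<lambda>v. ga z0 + Ga (v - z0) - gb v - h v)"
    by (rule concave_on_diff[OF concave_on_diff[OF tangent_a gb] h(1)])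
  then have "Min ((\<lambda>v. ga z0 + Ga (v - z0) - gb v - h v) ` vertices P)
      \<le> ga z0 + Ga (z - z0) - gb z - h z"
    by (rule concave_on_polytope_Min_vertices_le[OF P _ z])
  also have "\<dots> \<le> ga z - gb z - h z"
    using convex_on_ge_tangent[OF ga dga z0 z] by simp
  finally show "Min ((\<lambda>v. ga z0 + Ga (v - z0) - gb v - h v) ` vertices P) \<le> ga z - gb z - h z" .
  have "ga z - gb z - h z \<le> ga z - (gb z0 + Gb (z - z0)) - h z"
    using convex_on_ge_tangent[OF gb dgb z0 z] by simp
  also have "\<dots> \<le> Max ((\<lambda>v. ga v - (gb z0 + Gb (v - z0)) - h v) ` vertices P)"
    using convex_on_diff[OF convex_on_diff[OF ga tangent_b] h(2)]
    by (rule convex_on_polytope_le_Max_vertices[OF P _ z])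
  finally show "ga z - gb z - h z \<le> Max ((\<lambda>v. ga v - (gb z0 + Gb (v - z0)) - h v) ` vertices P)" .
qed

lemma real_interval_midpoint_radius:
  fixes a b x :: real
  assumes "a \<le> x" "x \<le> b"
  obtains \<xi> where "\<bar>\<xi>\<bar> \<le> 1" "x = \<xi> * ((b - a) / 2) + (a + b) / 2"
proof (cases "a = b")
  case True
  with assms show ?thesis
    by (intro that[of 0]) simp_all
next
  case False
  with assms show ?thesis
    by (intro that[of "(2 * x - a - b) / (b - a)"]) (simp_all add: abs_le_iff field_simps)
qed

lemma cbox_subset_zonotope_set:
  fixes em ep :: "real^'n"
  shows "cbox em ep \<subseteq> zonotope_set (\<lambda>j. ((ep $ j - em $ j) / 2) *\<^sub>R axis j 1) ((1/2) *\<^sub>R (em + ep))"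
proof
  fix r assume "r \<in> cbox em ep"
  then have "\<forall>j. \<exists>\<xi>. \<bar>\<xi>\<bar> \<le> 1 \<and> r $ j = \<xi> * ((ep $ j - em $ j) / 2) + (em $ j + ep $ j) / 2"
    unfolding mem_box_cart by (metis real_interval_midpoint_radius)
  then obtain \<xi> where \<xi>: "\<And>j. \<bar>\<xi> j\<bar> \<le> 1"
    and r: "\<And>j. r $ j = \<xi> j * ((ep $ j - em $ j) / 2) + (em $ j + ep $ j) / 2"
    by metis
  have axis_sum: "(\<Sum>j\<in>UNIV. c j *\<^sub>R axis j 1) = (\<chi> j. c j)" for c :: "'n \<Rightarrow> real"
    by (simp add: vec_eq_iff sum_component axis_def if_distrib[of "(*) _"] cong: if_cong)
  have r_eq: "r = (\<Sum>j\<in>UNIV. \<xi> j *\<^sub>R ((ep $ j - em $ j) / 2) *\<^sub>R axis j 1) + (1/2) *\<^sub>R (em + ep)"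
  proof -
    have "(\<Sum>j\<in>UNIV. \<xi> j *\<^sub>R ((ep $ j - em $ j) / 2) *\<^sub>R axis j 1) = (\<chi> j. \<xi> j * ((ep $ j - em $ j) / 2))"
      unfolding scaleR_scaleR by (rule axis_sum)
    then show ?thesis
      by (simp add: vec_eq_iff r)
  qed
  show "r \<in> zonotope_set (\<lambda>j. ((ep $ j - em $ j) / 2) *\<^sub>R axis j 1) ((1/2) *\<^sub>R (em + ep))"
    unfolding zonotope_set_def by (subst r_eq) (intro CollectI exI[of _ \<xi>] conjI refl allI \<xi>)
qed

lemma dc_linearization_remainder_in_cbox:
  fixes f fa fb F Fa Fb :: "'a::euclidean_space \<Rightarrow> real^'n"
  assumes P: "polytope P" and z0: "z0 \<in> P" and z: "z \<in> P"
    and f_dc: "\<forall>z\<in>P. f z = fa z - fb z"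
    and fa_cvx: "\<forall>i. convex_on P (\<lambda>z. fa z $ i)" and fb_cvx: "\<forall>i. convex_on P (\<lambda>z. fb z $ i)"
    and Fa: "(fa has_derivative Fa) (at z0)" and Fb: "(fb has_derivative Fb) (at z0)"
    and F: "linear F"
  shows "f z - (f z0 + F (z - z0))
    \<in> cbox (\<chi> i. Min ((\<lambda>v. (fa z0 + Fa (v - z0) - fb v - (f z0 + F (v - z0))) $ i) ` vertices P))
           (\<chi> i. Max ((\<lambda>v. (fa v - (fb z0 + Fb (v - z0)) - (f z0 + F (v - z0))) $ i) ` vertices P))"
  unfolding mem_box_cart
proof
  fix i
  have component_derivative: "((\<lambda>v. g v $ i) has_derivative (\<lambda>v. G v $ i)) (at z0 within P)"
    if "(g has_derivative G) (at z0)" for g G :: "'a \<Rightarrow> real^'n"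
    using bounded_linear.has_derivative[OF bounded_linear_vec_nth has_derivative_at_withinI[OF that]] .
  have F_i: "linear (\<lambda>v. F v $ i)"
    using linear_compose[OF F bounded_linear.linear[OF bounded_linear_vec_nth]] by (simp add: o_def)
  have "convex_on P (\<lambda>v. f z0 $ i + F (v - z0) $ i)" "concave_on P (\<lambda>v. f z0 $ i + F (v - z0) $ i)"
    using convex_on_affine[OF F_i] concave_on_affine[OF F_i] polytope_imp_convex[OF P] by blast+
  from dc_linearization_error_bounds[OF P z0 z fa_cvx[rule_format] fb_cvx[rule_format]
      component_derivative[OF Fa] component_derivative[OF Fb] this]
  show "(\<chi> i. Min ((\<lambda>v. (fa z0 + Fa (v - z0) - fb v - (f z0 + F (v - z0))) $ i) ` vertices P)) $ i
      \<le> (f z - (f z0 + F (z - z0))) $ i \<and>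
    (f z - (f z0 + F (z - z0))) $ i
      \<le> (\<chi> i. Max ((\<lambda>v. (fa v - (fb z0 + Fb (v - z0)) - (f z0 + F (v - z0))) $ i) ` vertices P)) $ i"
    using f_dc z by simp
qed

theorem theorem1:
  fixes X :: "(real^'n) set" and W :: "(real^'q) set" and u :: "real^'p"
    and f :: "(real^'n) \<times> (real^'p) \<times> (real^'q) \<Rightarrow> real^'n"
    and fa fb :: "(real^'n) \<times> (real^'p) \<times> (real^'q) \<Rightarrow> real^'n"
    and P :: "((real^'n) \<times> (real^'p) \<times> (real^'q)) set"
    and xb :: "real^'n" and wb :: "real^'q"
    and F Fa Fb :: "(real^'n) \<times> (real^'p) \<times> (real^'q) \<Rightarrow> real^'n"
    and em ep :: "real^'n"
  assumes X_cz: "is_cz X" and W_cz: "is_cz W"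
    and P_poly: "polytope P"
    and P_sup: "{(x, u, w) | x w. x \<in> X \<and> w \<in> W} \<subseteq> P"
    and f_dc: "\<forall>z\<in>P. f z = fa z - fb z"
    and fa_diff: "\<forall>z\<in>P. fa differentiable (at z)"
    and fb_diff: "\<forall>z\<in>P. fb differentiable (at z)"
    and fa_cvx: "\<forall>i. convex_on P (\<lambda>z. fa z $ i)"
    and fb_cvx: "\<forall>i. convex_on P (\<lambda>z. fb z $ i)"
    and zb_P: "(xb, u, wb) \<in> P"
    and F_der: "(f has_derivative F) (at (xb, u, wb))"
    and Fa_der: "(fa has_derivative Fa) (at (xb, u, wb))"
    and Fb_der: "(fb has_derivative Fb) (at (xb, u, wb))"
    and em_def: "em = (\<chi> i. Min ((\<lambda>z. (fa (xb, u, wb) + Fa (z - (xb, u, wb)) - fb z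
                   - (f (xb, u, wb) + F (z - (xb, u, wb)))) $ i) ` vertices P))"
    and ep_def: "ep = (\<chi> i. Max ((\<lambda>z. (fa z - (fb (xb, u, wb) + Fb (z - (xb, u, wb)))
                   - (f (xb, u, wb) + F (z - (xb, u, wb)))) $ i) ` vertices P))"
  shows "{f (x, u, w) | x w. x \<in> X \<and> w \<in> W}
           \<subseteq> {f (xb, u, wb) - F (xb, 0, 0) - F (0, 0, wb)}
               \<oplus>\<^sub>M (\<lambda>x. F (x, 0, 0)) ` X \<oplus>\<^sub>M (\<lambda>w. F (0, 0, w)) ` W
               \<oplus>\<^sub>M zonotope_set (\<lambda>j. ((ep $ j - em $ j) / 2) *\<^sub>R axis j 1) ((1/2) *\<^sub>R (em + ep))
       \<and> is_cz ({f (xb, u, wb) - F (xb, 0, 0) - F (0, 0, wb)}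
               \<oplus>\<^sub>M (\<lambda>x. F (x, 0, 0)) ` X \<oplus>\<^sub>M (\<lambda>w. F (0, 0, w)) ` W
               \<oplus>\<^sub>M zonotope_set (\<lambda>j. ((ep $ j - em $ j) / 2) *\<^sub>R axis j 1) ((1/2) *\<^sub>R (em + ep)))"
proof -
  let ?R = "zonotope_set (\<lambda>j. ((ep $ j - em $ j) / 2) *\<^sub>R axis j 1) ((1/2) *\<^sub>R (em + ep))"
  let ?c = "f (xb, u, wb) - F (xb, 0, 0) - F (0, 0, wb)"
  let ?Xp = "{?c} \<oplus>\<^sub>M (\<lambda>x. F (x, 0, 0)) ` X \<oplus>\<^sub>M (\<lambda>w. F (0, 0, w)) ` W \<oplus>\<^sub>M ?R"
  have F: "linear F"
    using F_der by (rule has_derivative_linear)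
  have F_x: "linear (\<lambda>x. F (x, 0, 0))" and F_w: "linear (\<lambda>w. F (0, 0, w))"
    by (rule linear_compose[OF _ F, unfolded o_def], simp add: linear_iff)+
  have "{f (x, u, w) | x w. x \<in> X \<and> w \<in> W} \<subseteq> ?Xp"
  proof clarify
    fix x w assume xw: "x \<in> X" "w \<in> W"
    define r where "r = f (x, u, w) - (f (xb, u, wb) + F ((x, u, w) - (xb, u, wb)))"
    have "r \<in> cbox em ep"
      unfolding r_def em_def ep_def using P_sup xw
      by (intro dc_linearization_remainder_in_cbox P_poly zb_P f_dc fa_cvx fb_cvx Fa_der Fb_der F) blast
    have "F ((x, u, w) - (xb, u, wb)) = F (x, 0, 0) - F (xb, 0, 0) + (F (0, 0, w) - F (0, 0, wb))"
      by (simp add: F linear_diff[symmetric] linear_add[symmetric])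
    then have "f (x, u, w) = ?c + F (x, 0, 0) + F (0, 0, w) + r"
      by (simp add: r_def algebra_simps)
    with xw \<open>r \<in> cbox em ep\<close> cbox_subset_zonotope_set show "f (x, u, w) \<in> ?Xp"
      unfolding msum_def by blast
  qed
  moreover have "is_cz ?Xp"
    by (intro is_cz_msum is_cz_singleton is_cz_zonotope_set is_cz_linear_image F_x F_w X_cz W_cz)
  ultimately show ?thesis ..
qed

end
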